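(* Let $n\ge 2$ and let ${\cal K}$ be a strongly connected closed simplicial complex of dimension $n$ of type $\{3,4\}$. Suppose there is an $(n-1)$-face $G$ of ${\cal K}$ such that every $(n-2)$-face $F\subset G$ lies in exactly $3$ $n$-faces. Then ${\cal K}$ is isomorphic to the boundary complex of the $(n+1)$-simplex (all proper nonempty subsets of an $(n+2)$-element set).
   Context: An (abstract) simplicial complex of dimension $n$ is a family of finite nonempty sets closed under taking nonempty subsets and under nonempty intersections, whose maximal members ($n$-faces) all have cardinality $n+1$. It is closed if every $(n-1)$-face lies in exactly two $n$-faces, and strongly connected if any two $n$-faces can be joined by a sequence of $n$-faces in which consecutive ones share an $(n-1)$-face. It is of type $\{3,4\}$ if every $(n-2)$-face lies in exactly $3$ or $4$ $n$-faces. *)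

theory Defs
  imports Main
begin

text \<open>A k-face is a member with k+1 elements.\<close>

definition simplicial_complex :: "nat \<Rightarrow> 'a set set \<Rightarrow> bool" where
  "simplicial_complex n K \<longleftrightarrow>
     (\<forall>S\<in>K. finite S \<and> S \<noteq> {}) \<and>
     (\<forall>S\<in>K. \<forall>T. T \<subseteq> S \<and> T \<noteq> {} \<longrightarrow> T \<in> K) \<and>
     (\<forall>S\<in>K. \<forall>T\<in>K. S \<inter> T \<noteq> {} \<longrightarrow> S \<inter> T \<in> K) \<and>
     (\<forall>S\<in>K. card S \<le> n + 1) \<and>
     (\<forall>S\<in>K. (\<forall>T\<in>K. S \<subseteq> T \<longrightarrow> T = S) \<longrightarrow> card S = n + 1)"

definition facets_containing :: "nat \<Rightarrow> 'a set set \<Rightarrow> 'a set \<Rightarrow> 'a set set" where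
  "facets_containing n K S = {T\<in>K. card T = n + 1 \<and> S \<subseteq> T}"

definition closed_complex :: "nat \<Rightarrow> 'a set set \<Rightarrow> bool" where
  "closed_complex n K \<longleftrightarrow> (\<forall>S\<in>K. card S = n \<longrightarrow> card (facets_containing n K S) = 2)"

definition facet_adjacent :: "nat \<Rightarrow> 'a set set \<Rightarrow> 'a set \<Rightarrow> 'a set \<Rightarrow> bool" where
  "facet_adjacent n K T T' \<longleftrightarrow> T \<in> K \<and> T' \<in> K \<and> card T = n + 1 \<and> card T' = n + 1 \<and>
     (\<exists>S\<in>K. card S = n \<and> S \<subseteq> T \<and> S \<subseteq> T')"

definition strongly_connected :: "nat \<Rightarrow> 'a set set \<Rightarrow> bool" where
  "strongly_connected n K \<longleftrightarrow>
     (\<forall>T\<in>K. \<forall>T'\<in>K. card T = n + 1 \<and> card T' = n + 1 \<longrightarrow> (facet_adjacent n K)\<^sup>*\<^sup>* T T')"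

definition type_34 :: "nat \<Rightarrow> 'a set set \<Rightarrow> bool" where
  "type_34 n K \<longleftrightarrow> (\<forall>S\<in>K. card S = n - 1 \<longrightarrow> card (facets_containing n K S) \<in> {3, 4})"

definition iso_simplex_boundary :: "nat \<Rightarrow> 'a set set \<Rightarrow> bool" where
  "iso_simplex_boundary n K \<longleftrightarrow>
     (\<exists>f :: 'a \<Rightarrow> nat. bij_betw f (\<Union>K) {0..<n+2} \<and>
        (image f) ` K = {S. S \<subseteq> {0..<n+2} \<and> S \<noteq> {} \<and> S \<noteq> {0..<n+2}})"

end

theory Submission
  imports Defs
begin

text \<open>Let \<open>G\<close> lie in the facets \<open>G \<union> {a}\<close> and \<open>G \<union> {b}\<close>, and put \<open>V = G \<union> {a, b}\<close>.
For \<open>v \<in> G\<close> the face \<open>F = G - {v}\<close> lies in exactly three facets; two of them are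
\<open>G \<union> {a}\<close> and \<open>G \<union> {b}\<close>, and closedness at the ridges \<open>F \<union> {a}\<close> and \<open>F \<union> {b}\<close> forces the
third to contain both, i.e. to be \<open>V - {v}\<close>. Thus all facets of the simplex on \<open>V\<close> lie
in \<open>K\<close>. They already use up both facets at each of their ridges, so by strong
connectedness they are all the facets of \<open>K\<close>, and \<open>K\<close> is the boundary of that simplex.\<close>

definition simplex_boundary :: "'a set \<Rightarrow> 'a set set" where
  "simplex_boundary V = {S. S \<subseteq> V \<and> S \<noteq> {} \<and> S \<noteq> V}"

lemma
  assumes "simplicial_complex n K" and "S \<in> K"
  shows simplicial_complex_finite: "finite S"
    and simplicial_complex_nonempty: "S \<noteq> {}"
    and simplicial_complex_subset: "T \<subseteq> S \<Longrightarrow> T \<noteq> {} \<Longrightarrow> T \<in> K"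
    and simplicial_complex_card_le: "card S \<le> n + 1"
    and simplicial_complex_maximal_card: "\<forall>T\<in>K. S \<subseteq> T \<longrightarrow> T = S \<Longrightarrow> card S = n + 1"
proof -
  have "(\<forall>S\<in>K. finite S \<and> S \<noteq> {}) \<and> (\<forall>S\<in>K. \<forall>T. T \<subseteq> S \<and> T \<noteq> {} \<longrightarrow> T \<in> K) \<and>
      (\<forall>S\<in>K. card S \<le> n + 1) \<and> (\<forall>S\<in>K. (\<forall>T\<in>K. S \<subseteq> T \<longrightarrow> T = S) \<longrightarrow> card S = n + 1)"
    using assms(1) unfolding simplicial_complex_def by (elim conjE) (intro conjI)
  then show "finite S" "S \<noteq> {}" "T \<subseteq> S \<Longrightarrow> T \<noteq> {} \<Longrightarrow> T \<in> K" "card S \<le> n + 1"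
    "\<forall>T\<in>K. S \<subseteq> T \<longrightarrow> T = S \<Longrightarrow> card S = n + 1"
    using assms(2) by blast+
qed

lemma simplicial_complex_facet_exists:
  assumes K: "simplicial_complex n K" and S: "S \<in> K"
  shows "\<exists>T\<in>K. S \<subseteq> T \<and> card T = n + 1"
proof -
  obtain T where T: "T \<in> K" "S \<subseteq> T"
    and greatest: "\<And>T'. T' \<in> K \<Longrightarrow> S \<subseteq> T' \<Longrightarrow> card T' \<le> card T"
    using Lattices_Big.ex_has_greatest_nat[of "\<lambda>T. T \<in> K \<and> S \<subseteq> T" S card "n + 2"]
      S simplicial_complex_card_le[OF K] by fastforce
  have "\<forall>T'\<in>K. T \<subseteq> T' \<longrightarrow> T' = T"
    using T greatest by (metis card_seteq simplicial_complex_finite[OF K] subset_trans)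
  then show ?thesis
    using T simplicial_complex_maximal_card[OF K] by blast
qed

lemma subset_card_Suc_obtain_insert:
  assumes "finite A" "B \<subseteq> A" "card A = Suc (card B)"
  obtains a where "a \<notin> B" "A = insert a B"
proof -
  have "card (A - B) = 1"
    using assms by (simp add: card_Diff_subset finite_subset)
  then obtain a where "A - B = {a}"
    by (auto simp: card_1_singleton_iff)
  then show ?thesis
    using that assms(2) by blast
qed

lemma closed_complex_card_facets_containing:
  "closed_complex n K \<Longrightarrow> R \<in> K \<Longrightarrow> card R = n \<Longrightarrow> card (facets_containing n K R) = 2"
  unfolding closed_complex_def by blast

lemma closed_complex_ridge_facets:
  assumes "simplicial_complex n K" "closed_complex n K" "G \<in> K" "card G = n"
  obtains a b where "a \<notin> G" "b \<notin> G" "a \<noteq> b" "insert a G \<in> K" "insert b G \<in> K"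
proof -
  obtain A B where AB: "facets_containing n K G = {A, B}" "A \<noteq> B"
    using closed_complex_card_facets_containing[OF assms(2-4)] by (auto simp: card_2_iff)
  have facet: "T \<in> K \<and> (\<exists>t. t \<notin> G \<and> T = insert t G)" if "T \<in> {A, B}" for T
  proof -
    have T: "T \<in> K" "card T = Suc (card G)" "G \<subseteq> T"
      using that AB(1) assms(4) unfolding facets_containing_def by auto
    then show ?thesis
      using subset_card_Suc_obtain_insert simplicial_complex_finite[OF assms(1)] by metis
  qed
  then show ?thesis
    using that AB(2) by (metis insertCI)
qed

lemma closed_complex_facets_containing_ridge:
  assumes "closed_complex n K" "R \<in> K" "card R = n"
    and "T \<in> facets_containing n K R" "T' \<in> facets_containing n K R" "T \<noteq> T'"
  shows "facets_containing n K R = {T, T'}"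
  using closed_complex_card_facets_containing[OF assms(1-3)] assms(4-6) by (auto simp: card_2_iff)

lemma closed_complex_other_facet:
  assumes "closed_complex n K" "R \<in> K" "card R = n"
  obtains T' where "T' \<in> facets_containing n K R" "T' \<noteq> T"
  using closed_complex_card_facets_containing[OF assms] that by (auto simp: card_2_iff)

lemma three_facets_containing_triangle:
  assumes K: "simplicial_complex n K" "closed_complex n K"
    and G: "G \<in> K" "card G = n" "v \<in> G"
    and three: "card (facets_containing n K (G - {v})) = 3"
    and ab: "a \<notin> G" "b \<notin> G" "a \<noteq> b" "insert a G \<in> K" "insert b G \<in> K"
  shows "insert a (insert b (G - {v})) \<in> K"
proof -
  define F where "F = G - {v}"
  have "finite G"
    using simplicial_complex_finite[OF K(1) G(1)] .
  then have card_ridge: "card (insert a F) = n" "card (insert b F) = n"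
    using G ab card_gt_0_iff[of G] unfolding F_def by auto
  have "insert a F \<in> K" "insert b F \<in> K"
    by (rule simplicial_complex_subset[OF K(1) ab(4)] simplicial_complex_subset[OF K(1) ab(5)];
        auto simp: F_def)+
  then obtain Ta Tb where
    Ta: "Ta \<in> facets_containing n K (insert a F)" "Ta \<noteq> insert a G" and
    Tb: "Tb \<in> facets_containing n K (insert b F)" "Tb \<noteq> insert b G"
    using closed_complex_other_facet[OF K(2)] card_ridge by metis
  have distinct: "Ta \<noteq> insert b G" "Tb \<noteq> insert a G" "insert a G \<noteq> insert b G"
    using Ta(1) Tb(1) ab unfolding F_def facets_containing_def by auto
  have four: "{insert a G, insert b G, Ta, Tb} \<subseteq> facets_containing n K F"
    using Ta(1) Tb(1) ab G \<open>finite G\<close> unfolding F_def facets_containing_def by auto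
  have "Ta = Tb"
  proof (rule ccontr)
    assume "Ta \<noteq> Tb"
    then have "card {insert a G, insert b G, Ta, Tb} = 4"
      using distinct Ta(2) Tb(2) by simp
    moreover have "finite (facets_containing n K F)"
      using three unfolding F_def by (intro card_ge_0_finite) simp
    ultimately show False
      using card_mono[OF _ four] three unfolding F_def by simp
  qed
  then have sub: "insert a (insert b F) \<subseteq> Ta" and Ta': "Ta \<in> K" "card Ta = n + 1"
    using Ta(1) Tb(1) unfolding facets_containing_def by auto
  have "card (insert a (insert b F)) = card Ta"
    using card_ridge ab Ta' \<open>finite G\<close> unfolding F_def by simp
  then show ?thesis
    using card_subset_eq[OF simplicial_complex_finite[OF K(1) Ta'(1)] sub] Ta' unfolding F_def by simp
qed

lemma simplex_around_three_facet_ridge: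
  assumes K: "simplicial_complex n K" "closed_complex n K" and "n \<ge> 2"
    and G: "G \<in> K" "card G = n"
    and three: "\<forall>F\<in>K. F \<subseteq> G \<and> card F = n - 1 \<longrightarrow> card (facets_containing n K F) = 3"
  obtains V where "finite V" "card V = n + 2" "\<forall>y\<in>V. V - {y} \<in> K"
proof -
  obtain a b where ab: "a \<notin> G" "b \<notin> G" "a \<noteq> b" "insert a G \<in> K" "insert b G \<in> K"
    using closed_complex_ridge_facets[OF K G] .
  define V where "V = insert a (insert b G)"
  have "finite G"
    using simplicial_complex_finite[OF K(1) G(1)] .
  have "V - {y} \<in> K" if "y \<in> V" for y
  proof -
    consider "y = a" | "y = b" | "y \<in> G"
      using \<open>y \<in> V\<close> unfolding V_def by blast
    then show ?thesis
    proof cases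
      case 1
      then show ?thesis using ab unfolding V_def by (simp add: insert_Diff_if)
    next
      case 2
      then show ?thesis using ab unfolding V_def by (simp add: insert_Diff_if insert_commute)
    next
      case 3
      have card_F: "card (G - {y}) = n - 1"
        using \<open>finite G\<close> G(2) 3 by simp
      then have "G - {y} \<noteq> {}"
        using \<open>n \<ge> 2\<close> card_gt_0_iff[of "G - {y}"] by simp
      then have "G - {y} \<in> K"
        by (rule simplicial_complex_subset[OF K(1) G(1) Diff_subset])
      then have "card (facets_containing n K (G - {y})) = 3"
        using three card_F by blast
      then have "insert a (insert b (G - {y})) \<in> K"
        using three_facets_containing_triangle[OF K G 3 _ ab] by blast
      moreover have "V - {y} = insert a (insert b (G - {y}))"
        using ab 3 unfolding V_def by auto
      ultimately show ?thesis by simp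
    qed
  qed
  moreover have "finite V" "card V = n + 2"
    using \<open>finite G\<close> G(2) ab unfolding V_def by auto
  ultimately show ?thesis
    using that by blast
qed

lemma closed_complex_adjacent_simplex_facet:
  assumes K: "closed_complex n K"
    and V: "finite V" "card V = n + 2" "\<forall>y\<in>V. V - {y} \<in> K"
    and x: "x \<in> V" and adj: "facet_adjacent n K (V - {x}) T"
  shows "\<exists>y\<in>V. T = V - {y}"
proof -
  obtain S where S: "S \<in> K" "card S = n" "S \<subseteq> V - {x}" "S \<subseteq> T" "T \<in> K" "card T = n + 1"
    using adj unfolding facet_adjacent_def by blast
  obtain y where y: "y \<notin> S" "V - {x} = insert y S"
    using subset_card_Suc_obtain_insert[of "V - {x}" S] S(2,3) V(1,2) x by auto
  have yx: "y \<in> V" "y \<noteq> x"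
    using y by auto
  have "S \<subseteq> V - {y}"
    using y S(3) by blast
  then have "V - {x} \<in> facets_containing n K S" "V - {y} \<in> facets_containing n K S"
    using V x yx S(3) unfolding facets_containing_def by simp_all
  moreover have "V - {x} \<noteq> V - {y}"
    using x yx by blast
  moreover have "T \<in> facets_containing n K S"
    using S unfolding facets_containing_def by auto
  ultimately show ?thesis
    using closed_complex_facets_containing_ridge[OF K S(1,2)] x yx(1) by blast
qed

lemma closed_strongly_connected_eq_simplex_boundary:
  assumes K: "simplicial_complex n K" "closed_complex n K" "strongly_connected n K"
    and V: "finite V" "card V = n + 2" "\<forall>y\<in>V. V - {y} \<in> K"
  shows "K = simplex_boundary V"
proof -
  obtain x where x: "x \<in> V"
    using V(2) by fastforce
  have facets: "\<exists>y\<in>V. T = V - {y}" if "T \<in> K" "card T = n + 1" for T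
  proof -
    have "(facet_adjacent n K)\<^sup>*\<^sup>* (V - {x}) T"
      using K(3) V x that unfolding strongly_connected_def by simp
    then show ?thesis
    proof (induction rule: rtranclp_induct)
      case base
      then show ?case using x by blast
    next
      case (step T1 T2)
      then show ?case
        using closed_complex_adjacent_simplex_facet[OF K(2) V] by blast
    qed
  qed
  show ?thesis
  proof (intro set_eqI iffI)
    fix S assume "S \<in> K"
    then show "S \<in> simplex_boundary V"
      using facets simplicial_complex_facet_exists[OF K(1)] simplicial_complex_nonempty[OF K(1)]
      unfolding simplex_boundary_def by blast
  next
    fix S assume "S \<in> simplex_boundary V"
    then obtain y where "y \<in> V" "S \<subseteq> V - {y}" "S \<noteq> {}"
      unfolding simplex_boundary_def by blast
    then show "S \<in> K"
      using simplicial_complex_subset[OF K(1)] V(3) by blast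
  qed
qed

lemma bij_betw_image_simplex_boundary:
  assumes "bij_betw f V W"
  shows "image f ` simplex_boundary V = simplex_boundary W"
proof (intro equalityI subsetI)
  have inj: "inj_on f V" and W: "f ` V = W"
    using assms by (auto simp: bij_betw_def)
  fix S' assume "S' \<in> image f ` simplex_boundary V"
  then obtain S where S: "S \<subseteq> V" "S \<noteq> {}" "S \<noteq> V" "S' = f ` S"
    unfolding simplex_boundary_def by blast
  then have "f ` S \<noteq> f ` V"
    using inj_on_image_eq_iff[OF inj S(1)] by blast
  then show "S' \<in> simplex_boundary W"
    using S W unfolding simplex_boundary_def by blast
next
  have W: "f ` V = W"
    using assms by (auto simp: bij_betw_def)
  fix S' assume S': "S' \<in> simplex_boundary W"
  define S where "S = {x\<in>V. f x \<in> S'}"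
  have "f ` S = S'"
    using S' W unfolding S_def simplex_boundary_def by blast
  moreover have "S \<in> simplex_boundary V"
    using S' W \<open>f ` S = S'\<close> unfolding S_def simplex_boundary_def by blast
  ultimately show "S' \<in> image f ` simplex_boundary V"
    by blast
qed

lemma iso_simplex_boundary_simplex_boundary:
  assumes "finite V" "card V = n + 2"
  shows "iso_simplex_boundary n (simplex_boundary V)"
proof -
  from finite_same_card_bij[OF assms(1), of "{0..<n+2}"] assms(2)
  obtain f :: "'a \<Rightarrow> nat" where f: "bij_betw f V {0..<n+2}"
    by auto
  have "\<Union>(simplex_boundary V) = V"
  proof (intro equalityI subsetI)
    fix x assume "x \<in> V"
    moreover have "card {x} \<noteq> card V"
      using assms(2) by simp
    then have "{x} \<noteq> V"
      by metis
    ultimately show "x \<in> \<Union>(simplex_boundary V)"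
      unfolding simplex_boundary_def by blast
  qed (auto simp: simplex_boundary_def)
  then show ?thesis
    unfolding iso_simplex_boundary_def
  proof (intro exI conjI)
    show "image f ` simplex_boundary V = {S. S \<subseteq> {0..<n+2} \<and> S \<noteq> {} \<and> S \<noteq> {0..<n+2}}"
      using bij_betw_image_simplex_boundary[OF f] by (simp only: simplex_boundary_def)
  qed (use f in simp)
qed

theorem mainTheorem3:
  fixes K :: "'a set set" and n :: nat and G :: "'a set"
  assumes "n \<ge> 2"
    and "simplicial_complex n K"
    and "closed_complex n K"
    and "strongly_connected n K"
    and "type_34 n K"
    and "G \<in> K" and "card G = n"
    and "\<forall>F\<in>K. F \<subseteq> G \<and> card F = n - 1 \<longrightarrow> card (facets_containing n K F) = 3"
  shows "iso_simplex_boundary n K"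
proof -
  obtain V where V: "finite V" "card V = n + 2" "\<forall>y\<in>V. V - {y} \<in> K"
    using simplex_around_three_facet_ridge[OF assms(2,3,1,6,7,8)] .
  then have "K = simplex_boundary V"
    by (rule closed_strongly_connected_eq_simplex_boundary[OF assms(2-4)])
  then show ?thesis
    using iso_simplex_boundary_simplex_boundary[OF V(1,2)] by simp
qed

end
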